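(* Let $(G_k,y)$ be a mass-action system with exactly one terminal strong component ($t=1$), considered as a single (independent) subnetwork, and assume $\ker(YR_k)\cap\mathbb{R}^{V_s}_{>0}\neq\emptyset$. Then (1) $K=L=S$, and (2) $d=\delta+t'-1$.
   Context: A reaction network $(G,y)$: finite simple digraph $G=(V,E)$ and map $y:V\to\mathbb{R}^n$; rate constants $k\in\mathbb{R}^E_{>0}$. $V_s$: source vertices (with an outgoing edge). $Y\in\mathbb{R}^{n\times V}$ has columns $y(i)$. The rectangular Laplacian $R_k\in\mathbb{R}^{V\times V_s}$ has $(R_k)_{i,j}=k_{j\to i}$ if $(j\to i)\in E$, $(R_k)_{j,j}=-\sum_{(j\to i')\in E}k_{j\to i'}$, $0$ otherwise. $S=\operatorname{span}\{y(i')-y(i):(i\to i')\in E\}$, $K=\operatorname{im}(YR_k)$, $L=\operatorname{span}\{y(i)-y(i'):i,i'\in V_s\}$. A terminal strong component is a strongly connected component with no edge leaving it; $t$ is their number and $t'$ the number of those with at least two vertices. $l$ is the number of weakly connected components; deficiency $\delta=|V|-l-\dim S$; dependency $d=|V_s|-1-\dim L$. *)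

theory Defs
  imports "HOL-Analysis.Analysis"
begin

text \<open>A reaction network (G,y): finite simple digraph G = (V,E) (no loops; multi-edges
  are impossible since E is a set of pairs) together with y : V \<rightarrow> R^n.\<close>

definition simple_digraph :: "'v set \<Rightarrow> ('v \<times> 'v) set \<Rightarrow> bool" where
  "simple_digraph V E \<longleftrightarrow> finite V \<and> E \<subseteq> V \<times> V \<and> (\<forall>v. (v, v) \<notin> E)"

definition rate_constants :: "('v \<times> 'v) set \<Rightarrow> ('v \<times> 'v \<Rightarrow> real) \<Rightarrow> bool" where
  "rate_constants E k \<longleftrightarrow> (\<forall>e\<in>E. k e > 0)"

definition sources :: "'v set \<Rightarrow> ('v \<times> 'v) set \<Rightarrow> 'v set" where
  "sources V E = {j \<in> V. \<exists>i. (j, i) \<in> E}"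

text \<open>Rectangular Laplacian R_k, entry (i,j) for i in V, j in V_s.\<close>
definition rect_laplacian :: "('v \<times> 'v) set \<Rightarrow> ('v \<times> 'v \<Rightarrow> real) \<Rightarrow> 'v \<Rightarrow> 'v \<Rightarrow> real" where
  "rect_laplacian E k i j =
     (if (j, i) \<in> E then k (j, i)
      else if i = j then - (\<Sum>i'\<in>{i'. (j, i') \<in> E}. k (j, i'))
      else 0)"

text \<open>The linear map Y R_k : R^{V_s} \<rightarrow> R^n (vectors in R^{V_s} are functions on 'v,
  only their values on V_s matter).\<close>
definition YR :: "'v set \<Rightarrow> ('v \<times> 'v) set \<Rightarrow> ('v \<Rightarrow> real ^ 'n) \<Rightarrow> ('v \<times> 'v \<Rightarrow> real)
                   \<Rightarrow> ('v \<Rightarrow> real) \<Rightarrow> real ^ 'n" where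
  "YR V E y k x = (\<Sum>i\<in>V. (\<Sum>j\<in>sources V E. rect_laplacian E k i j * x j) *\<^sub>R y i)"

definition kinetic_subspace :: "'v set \<Rightarrow> ('v \<times> 'v) set \<Rightarrow> ('v \<Rightarrow> real ^ 'n) \<Rightarrow> ('v \<times> 'v \<Rightarrow> real)
                   \<Rightarrow> (real ^ 'n) set" where
  "kinetic_subspace V E y k = range (YR V E y k)"

definition positive_kernel :: "'v set \<Rightarrow> ('v \<times> 'v) set \<Rightarrow> ('v \<Rightarrow> real ^ 'n) \<Rightarrow> ('v \<times> 'v \<Rightarrow> real)
                   \<Rightarrow> bool" where
  "positive_kernel V E y k \<longleftrightarrow> (\<exists>x. (\<forall>j\<in>sources V E. x j > 0) \<and> YR V E y k x = 0)"

definition stoich_subspace :: "('v \<times> 'v) set \<Rightarrow> ('v \<Rightarrow> real ^ 'n) \<Rightarrow> (real ^ 'n) set" where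
  "stoich_subspace E y = span {y i' - y i | i i'. (i, i') \<in> E}"

definition source_subspace :: "'v set \<Rightarrow> ('v \<times> 'v) set \<Rightarrow> ('v \<Rightarrow> real ^ 'n) \<Rightarrow> (real ^ 'n) set" where
  "source_subspace V E y = span {y i - y i' | i i'. i \<in> sources V E \<and> i' \<in> sources V E}"

definition scc :: "('v \<times> 'v) set \<Rightarrow> 'v \<Rightarrow> 'v set" where
  "scc E v = {u. (v, u) \<in> E\<^sup>* \<and> (u, v) \<in> E\<^sup>*}"

definition terminal_scc :: "'v set \<Rightarrow> ('v \<times> 'v) set \<Rightarrow> 'v set \<Rightarrow> bool" where
  "terminal_scc V E C \<longleftrightarrow> (\<exists>v\<in>V. C = scc E v) \<and> (\<forall>u\<in>C. \<forall>w. (u, w) \<in> E \<longrightarrow> w \<in> C)"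

definition num_terminal :: "'v set \<Rightarrow> ('v \<times> 'v) set \<Rightarrow> nat" where
  "num_terminal V E = card {C. terminal_scc V E C}"

definition num_terminal_nontrivial :: "'v set \<Rightarrow> ('v \<times> 'v) set \<Rightarrow> nat" where
  "num_terminal_nontrivial V E = card {C. terminal_scc V E C \<and> card C \<ge> 2}"

definition num_linkage_classes :: "'v set \<Rightarrow> ('v \<times> 'v) set \<Rightarrow> nat" where
  "num_linkage_classes V E = card {{u \<in> V. (v, u) \<in> (E \<union> E\<inverse>)\<^sup>*} | v. v \<in> V}"

definition deficiency :: "'v set \<Rightarrow> ('v \<times> 'v) set \<Rightarrow> ('v \<Rightarrow> real ^ 'n) \<Rightarrow> int" where
  "deficiency V E y = int (card V) - int (num_linkage_classes V E) - int (dim (stoich_subspace E y))"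

definition dependency :: "'v set \<Rightarrow> ('v \<times> 'v) set \<Rightarrow> ('v \<Rightarrow> real ^ 'n) \<Rightarrow> int" where
  "dependency V E y = int (card (sources V E)) - 1 - int (dim (source_subspace V E y))"

end

theory Submission
  imports Defs
begin

(* All three spaces K, L and S are subspaces of R^n, so it suffices that they have the same
   orthogonal complement, namely the u for which i \<mapsto> u \<bullet> y i is constant on V.
   For S this holds because every vertex reaches the unique terminal component.
   A vector u is orthogonal to K iff u \<bullet> y is harmonic for the graph Laplacian at every
   source, and the maximum principle along paths into the terminal component makes it constant.
   A vector u is orthogonal to L iff u \<bullet> y is constant on the sources; if some vertex is not
   a source, the terminal component is a single sink t, and pairing u with a positive kernel
   vector of Y R_k forces the value at t to agree.  Finally d = \<delta> + t' - 1 is counting: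
   there is one linkage class, and |V_s| = |V| - 1 + t'. *)

section \<open>Reachability in a digraph with a unique terminal component\<close>

lemma rtrancl_in_vertices:
  assumes "E \<subseteq> V \<times> V" "(a, b) \<in> E\<^sup>*" "a \<in> V"
  shows "b \<in> V"
  using assms(2,3) by (induction rule: rtrancl_induct) (use assms(1) in auto)

lemma reaches_terminal_scc:
  assumes sd: "simple_digraph V E" and a: "a \<in> V"
  obtains b where "(a, b) \<in> E\<^sup>*" "b \<in> V" "terminal_scc V E (scc E b)"
proof -
  have EV: "E \<subseteq> V \<times> V" and fV: "finite V" using sd by (auto simp: simple_digraph_def)
  define R where "R x = {z. (x, z) \<in> E\<^sup>*}" for x
  have R_finite: "finite (R x)" if "x \<in> V" for x
    using rtrancl_in_vertices[OF EV _ that] fV by (auto simp: R_def intro: finite_subset)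
  \<comment> \<open>A reachable vertex with the fewest reachable vertices lies in a terminal component.\<close>
  obtain b where b: "(a, b) \<in> E\<^sup>*"
    and b_min: "\<And>b'. (a, b') \<in> E\<^sup>* \<Longrightarrow> card (R b) \<le> card (R b')"
    using ex_has_least_nat[of "\<lambda>b. (a, b) \<in> E\<^sup>*" a "\<lambda>b. card (R b)"] by auto
  have bV: "b \<in> V" using rtrancl_in_vertices[OF EV b a] .
  have "w \<in> scc E b" if "u \<in> scc E b" "(u, w) \<in> E" for u w
  proof -
    have bw: "(b, w) \<in> E\<^sup>*" using that by (auto simp: scc_def)
    then have "R w \<subseteq> R b" by (auto simp: R_def)
    moreover have "card (R b) \<le> card (R w)" using b_min b bw by (meson rtrancl_trans)
    ultimately have "R w = R b" using R_finite[OF bV] by (meson card_seteq)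
    then show ?thesis using bw by (auto simp: R_def scc_def)
  qed
  then have "terminal_scc V E (scc E b)" using bV by (auto simp: terminal_scc_def)
  with b bV show thesis by (rule that)
qed

lemma terminal_scc_non_source:
  assumes "a \<in> V" "a \<notin> sources V E"
  shows "terminal_scc V E {a}"
proof -
  have no_out: "(a, w) \<notin> E" for w using assms by (auto simp: sources_def)
  have "u = a" if "(a, u) \<in> E\<^sup>*" for u
    using that by (induction rule: rtrancl_induct) (use no_out in auto)
  then have "scc E a = {a}" by (auto simp: scc_def)
  then show ?thesis using assms(1) no_out by (auto simp: terminal_scc_def)
qed

locale unique_terminal_scc =
  fixes V :: "'v set" and E :: "('v \<times> 'v) set" and t :: 'v
  assumes simple: "simple_digraph V E"
    and root: "t \<in> V"
    and terminal_sccs: "{C. terminal_scc V E C} = {scc E t}"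
begin

lemma edges_in_vertices: "E \<subseteq> V \<times> V"
  and finite_vertices: "finite V"
  and loop_free: "(v, v) \<notin> E"
  using simple by (auto simp: simple_digraph_def)

lemma terminal_scc_iff: "terminal_scc V E C \<longleftrightarrow> C = scc E t"
  using terminal_sccs by blast

lemma root_scc_closed: "u \<in> scc E t \<Longrightarrow> (u, w) \<in> E \<Longrightarrow> w \<in> scc E t"
  using terminal_scc_iff[of "scc E t"] by (auto simp: terminal_scc_def)

lemma sources_subset: "sources V E \<subseteq> V"
  by (auto simp: sources_def)

lemma finite_out_neighbours: "finite {i. (j, i) \<in> E}"
  using edges_in_vertices finite_vertices by (auto intro: finite_subset)

lemma finite_sources: "finite (sources V E)"
  using sources_subset finite_vertices by (rule finite_subset)

lemma reaches_root:
  assumes "a \<in> V"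
  shows "(a, t) \<in> E\<^sup>*"
proof -
  obtain b where ab: "(a, b) \<in> E\<^sup>*" and "terminal_scc V E (scc E b)"
    using reaches_terminal_scc[OF simple assms] .
  then have "scc E b = scc E t" using terminal_sccs by auto
  then have "(b, t) \<in> E\<^sup>*" by (auto simp: scc_def)
  with ab show ?thesis by simp
qed

lemma non_source_is_root:
  assumes "a \<in> V" "a \<notin> sources V E"
  shows "scc E t = {a}"
  using terminal_scc_non_source[OF assms] terminal_scc_iff by simp

lemma sources_eq_if_nontrivial_root:
  assumes "2 \<le> card (scc E t)"
  shows "sources V E = V"
  using non_source_is_root assms sources_subset by fastforce

lemma sources_eq_if_trivial_root:
  assumes "\<not> 2 \<le> card (scc E t)"
  shows "scc E t = {t}" and "sources V E = V - {t}"
proof -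
  have t_scc: "t \<in> scc E t" by (simp add: scc_def)
  have "finite (scc E t)"
    using rtrancl_in_vertices[OF edges_in_vertices _ root] finite_vertices
    by (auto simp: scc_def intro: finite_subset)
  then show root_scc: "scc E t = {t}"
    using assms t_scc card_le_Suc0_iff_eq[of "scc E t"] by fastforce
  have "t \<notin> sources V E"
  proof
    assume "t \<in> sources V E"
    then obtain z where tz: "(t, z) \<in> E" by (auto simp: sources_def)
    then have "z \<in> scc E t" using t_scc root_scc_closed by blast
    then show False using tz root_scc loop_free by auto
  qed
  moreover have "a \<in> sources V E" if "a \<in> V" "a \<noteq> t" for a
    using that non_source_is_root root_scc by blast
  ultimately show "sources V E = V - {t}" using sources_subset by auto
qed

lemma card_sources:
  "int (card (sources V E)) = int (card V) - 1 + int (num_terminal_nontrivial V E)"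
proof (cases "2 \<le> card (scc E t)")
  case True
  then have "{C. terminal_scc V E C \<and> 2 \<le> card C} = {scc E t}" using terminal_scc_iff by auto
  then show ?thesis
    using sources_eq_if_nontrivial_root[OF True] by (simp add: num_terminal_nontrivial_def)
next
  case False
  then have "{C. terminal_scc V E C \<and> 2 \<le> card C} = {}" using terminal_scc_iff by auto
  then have "num_terminal_nontrivial V E = 0"
    unfolding num_terminal_nontrivial_def by (simp only: card.empty)
  moreover have "card V \<ge> 1" using root finite_vertices by (auto simp: Suc_le_eq card_gt_0_iff)
  ultimately show ?thesis
    using sources_eq_if_trivial_root[OF False] root finite_vertices by (simp add: of_nat_diff)
qed

lemma num_linkage_classes_eq_1: "num_linkage_classes V E = 1"
proof -
  have "(v, u) \<in> (E \<union> E\<inverse>)\<^sup>*" if "v \<in> V" "u \<in> V" for u v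
  proof -
    have "(v, t) \<in> (E \<union> E\<inverse>)\<^sup>*"
      using reaches_root[OF that(1)] rtrancl_mono[of E "E \<union> E\<inverse>"] by blast
    moreover have "(t, u) \<in> (E\<inverse>)\<^sup>*"
      using reaches_root[OF that(2)] by (simp add: rtrancl_converse)
    then have "(t, u) \<in> (E \<union> E\<inverse>)\<^sup>*"
      using rtrancl_mono[of "E\<inverse>" "E \<union> E\<inverse>"] by blast
    ultimately show ?thesis by (rule rtrancl_trans)
  qed
  then have "{{u \<in> V. (v, u) \<in> (E \<union> E\<inverse>)\<^sup>*} | v. v \<in> V} = {V}"
    using root by blast
  then show ?thesis by (simp add: num_linkage_classes_def)
qed

end

lemma unique_terminal_sccE:
  assumes "simple_digraph V E" "num_terminal V E = 1"
  obtains t where "unique_terminal_scc V E t"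
proof -
  obtain T where T: "{C. terminal_scc V E C} = {T}"
    using assms(2) unfolding num_terminal_def by (rule card_1_singletonE)
  then have "terminal_scc V E T" by blast
  then obtain t where "t \<in> V" "T = scc E t" by (auto simp: terminal_scc_def)
  with assms(1) T show thesis
    by (intro that) (simp add: unique_terminal_scc_def)
qed

section \<open>The graph Laplacian and a maximum principle\<close>

text \<open>The entry of R_k^T w at a source j, see sum_rect_laplacian.\<close>

definition laplacian :: "('v \<times> 'v) set \<Rightarrow> ('v \<times> 'v \<Rightarrow> real) \<Rightarrow> ('v \<Rightarrow> real) \<Rightarrow> 'v \<Rightarrow> real"
  where "laplacian E k w j = (\<Sum>i\<in>{i. (j, i) \<in> E}. k (j, i) * (w i - w j))"

lemma laplacian_uminus: "laplacian E k (\<lambda>i. - w i) j = - laplacian E k w j"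
  by (simp add: laplacian_def sum_negf[symmetric] algebra_simps)

lemma laplacian_constant_on:
  assumes "E \<subseteq> V \<times> V" "w constant_on V" "j \<in> V"
  shows "laplacian E k w j = 0"
  using assms by (auto simp: laplacian_def constant_on_def intro!: sum.neutral)

lemma sum_rect_laplacian:
  assumes sd: "simple_digraph V E" and j: "j \<in> V"
  shows "(\<Sum>i\<in>V. rect_laplacian E k i j * w i) = laplacian E k w j"
proof -
  define Out where "Out = {i. (j, i) \<in> E}"
  have fV: "finite V" and Out_V: "Out \<subseteq> V - {j}" and no_loop: "(j, j) \<notin> E"
    using sd by (auto simp: simple_digraph_def Out_def)
  have "(\<Sum>i\<in>V. rect_laplacian E k i j * w i)
        = rect_laplacian E k j j * w j + (\<Sum>i\<in>V - {j}. rect_laplacian E k i j * w i)"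
    using j fV by (simp add: sum.remove)
  also have "(\<Sum>i\<in>V - {j}. rect_laplacian E k i j * w i) = (\<Sum>i\<in>Out. k (j, i) * w i)"
    using fV Out_V
    by (intro sum.mono_neutral_cong_right) (auto simp: rect_laplacian_def Out_def)
  also have "rect_laplacian E k j j = - (\<Sum>i\<in>Out. k (j, i))"
    using no_loop by (simp add: rect_laplacian_def Out_def)
  finally show ?thesis
    by (simp add: laplacian_def Out_def[symmetric] algebra_simps sum_subtractf sum_distrib_left)
qed

lemma subharmonic_max_propagates:
  fixes f :: "'v \<Rightarrow> real"
  assumes sd: "simple_digraph V E" and rc: "rate_constants E k"
    and subharmonic: "\<And>j. j \<in> sources V E \<Longrightarrow> 0 \<le> laplacian E k f j"
    and max: "\<And>b. b \<in> V \<Longrightarrow> f b \<le> f a"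
    and path: "(a, z) \<in> E\<^sup>*"
  shows "f z = f a"
  using path
proof (induction rule: rtrancl_induct)
  case (step z z')
  have EV: "E \<subseteq> V \<times> V" and fV: "finite V" using sd by (auto simp: simple_digraph_def)
  define Out where "Out = {i. (z, i) \<in> E}"
  have "z \<in> sources V E" using step(2) EV by (auto simp: sources_def)
  moreover have "(\<Sum>i\<in>Out. k (z, i) * (f z - f i)) = - laplacian E k f z"
    by (simp add: laplacian_def Out_def sum_negf[symmetric] algebra_simps)
  moreover have terms_nonneg: "0 \<le> k (z, i) * (f z - f i)" if "i \<in> Out" for i
    using that EV rc max step.IH by (auto simp: Out_def rate_constants_def less_imp_le)
  ultimately have "(\<Sum>i\<in>Out. k (z, i) * (f z - f i)) = 0"
    using subharmonic[of z] sum_nonneg[of Out "\<lambda>i. k (z, i) * (f z - f i)"] terms_nonneg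
    by fastforce
  moreover have "finite Out" using EV fV by (auto simp: Out_def intro: finite_subset)
  ultimately have "\<forall>i\<in>Out. k (z, i) * (f z - f i) = 0"
    by (simp add: sum_nonneg_eq_0_iff terms_nonneg)
  moreover have "k (z, z') > 0" using rc step(2) by (auto simp: rate_constants_def)
  ultimately show ?case using step(2,3) by (force simp: Out_def)
qed simp

context unique_terminal_scc
begin

lemma subharmonic_le_root:
  assumes rc: "rate_constants E k"
    and subharmonic: "\<And>j. j \<in> sources V E \<Longrightarrow> 0 \<le> laplacian E k f j"
    and a: "a \<in> V"
  shows "f a \<le> f t"
proof -
  have "Max (f ` V) \<in> f ` V" using finite_vertices a by (intro Max_in) auto
  then obtain m where m: "m \<in> V" "f m = Max (f ` V)" by (metis imageE)
  then have "f b \<le> f m" if "b \<in> V" for b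
    using that finite_vertices by simp
  then have "f t = f m"
    using subharmonic_max_propagates[OF simple rc subharmonic] reaches_root[OF m(1)] by blast
  then show ?thesis using \<open>\<And>b. b \<in> V \<Longrightarrow> f b \<le> f m\<close> a by simp
qed

lemma harmonic_constant_on:
  assumes rc: "rate_constants E k"
    and harmonic: "\<And>j. j \<in> sources V E \<Longrightarrow> laplacian E k f j = 0"
  shows "f constant_on V"
proof -
  have "f a = f t" if "a \<in> V" for a
  proof (rule antisym)
    show "f a \<le> f t"
      using subharmonic_le_root[OF rc _ that, of f] harmonic by simp
    show "f t \<le> f a"
      using subharmonic_le_root[OF rc _ that, of "\<lambda>i. - f i"] harmonic
      by (simp add: laplacian_uminus)
  qed
  then show ?thesis unfolding constant_on_def by blast
qed

lemma constant_on_sources_imp_constant_on: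
  assumes rc: "rate_constants E k"
    and x_pos: "\<And>j. j \<in> sources V E \<Longrightarrow> 0 < x j"
    and balance: "(\<Sum>j\<in>sources V E. x j * laplacian E k w j) = 0"
    and const: "w constant_on sources V E"
  shows "w constant_on V"
proof (cases "2 \<le> card (scc E t)")
  case True
  then show ?thesis using const sources_eq_if_nontrivial_root by simp
next
  case False
  note sources_eq = sources_eq_if_trivial_root(2)[OF False]
  obtain c where c: "\<And>i. i \<in> sources V E \<Longrightarrow> w i = c"
    using const by (auto simp: constant_on_def)
  show ?thesis
  proof (cases "sources V E = {}")
    case True
    then have "V = {t}" using sources_eq root by auto
    then show ?thesis by (simp add: constant_on_def)
  next
    case False
    then obtain a where a: "a \<in> V" "a \<noteq> t" using sources_eq by auto
    then have "(a, t) \<in> E\<^sup>+" using reaches_root by (auto dest: rtranclD)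
    then obtain j where jt: "(j, t) \<in> E" by (metis tranclD2)
    then have j: "j \<in> sources V E" using edges_in_vertices by (auto simp: sources_def)
    define into_root where "into_root j' = (if (j', t) \<in> E then k (j', t) else 0)" for j'
    \<comment> \<open>Every out-neighbour of a source is either a source, with value c, or the sink t.\<close>
    have "laplacian E k w j' = into_root j' * (w t - c)" if "j' \<in> sources V E" for j'
    proof -
      have "laplacian E k w j' = (\<Sum>i\<in>{i. (j', i) \<in> E}. if i = t then k (j', t) * (w t - c) else 0)"
        unfolding laplacian_def
        by (rule sum.cong) (use that c edges_in_vertices sources_eq in auto)
      also have "\<dots> = into_root j' * (w t - c)"
        by (simp add: finite_out_neighbours into_root_def)
      finally show ?thesis .
    qed
    then have "(\<Sum>j'\<in>sources V E. x j' * into_root j') * (w t - c) = 0"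
      using balance by (simp add: sum_distrib_right mult.assoc)
    moreover have "0 < (\<Sum>j'\<in>sources V E. x j' * into_root j')"
      using x_pos rc jt j finite_sources
      by (intro sum_pos2[where i = j]) (auto simp: into_root_def rate_constants_def less_imp_le)
    ultimately have "w t = c" by simp
    then have "w i = c" if "i \<in> V" for i
      using that c sources_eq by (cases "i = t") auto
    then show ?thesis by (auto simp: constant_on_def)
  qed
qed

end

section \<open>The common orthogonal complement of K, L and S\<close>

definition YR_column :: "'v set \<Rightarrow> ('v \<times> 'v) set \<Rightarrow> ('v \<Rightarrow> real ^ 'n) \<Rightarrow> ('v \<times> 'v \<Rightarrow> real)
                          \<Rightarrow> 'v \<Rightarrow> real ^ 'n"
  where "YR_column V E y k j = (\<Sum>i\<in>V. rect_laplacian E k i j *\<^sub>R y i)"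

definition constant_on_complexes :: "'v set \<Rightarrow> ('v \<Rightarrow> real ^ 'n) \<Rightarrow> (real ^ 'n) set"
  where "constant_on_complexes A y = {u. (\<lambda>i. u \<bullet> y i) constant_on A}"

lemma YR_eq_sum_columns:
  "YR V E y k x = (\<Sum>j\<in>sources V E. x j *\<^sub>R YR_column V E y k j)"
proof -
  have "YR V E y k x = (\<Sum>i\<in>V. \<Sum>j\<in>sources V E. x j *\<^sub>R (rect_laplacian E k i j *\<^sub>R y i))"
    by (simp add: YR_def scaleR_sum_left mult.commute)
  also have "\<dots> = (\<Sum>j\<in>sources V E. x j *\<^sub>R YR_column V E y k j)"
    by (subst sum.swap) (simp add: YR_column_def scaleR_sum_right)
  finally show ?thesis .
qed

lemma YR_add: "YR V E y k (\<lambda>j. x j + x' j) = YR V E y k x + YR V E y k x'"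
  by (simp add: YR_eq_sum_columns scaleR_add_left sum.distrib)

lemma YR_scale: "YR V E y k (\<lambda>j. c * x j) = c *\<^sub>R YR V E y k x"
  by (simp add: YR_eq_sum_columns scaleR_sum_right)

lemma inner_YR_column:
  assumes "simple_digraph V E" "j \<in> V"
  shows "u \<bullet> YR_column V E y k j = laplacian E k (\<lambda>i. u \<bullet> y i) j"
  using sum_rect_laplacian[OF assms] by (simp add: YR_column_def inner_sum_right)

lemma kinetic_subspace_eq_span:
  assumes "finite V"
  shows "kinetic_subspace V E y k = span (YR_column V E y k ` sources V E)"
proof
  show "kinetic_subspace V E y k \<subseteq> span (YR_column V E y k ` sources V E)"
    unfolding kinetic_subspace_def YR_eq_sum_columns
    by (blast intro: span_sum span_scale span_base)
  have finite_sources: "finite (sources V E)"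
    using assms by (auto simp: sources_def)
  have "YR_column V E y k j = YR V E y k (\<lambda>j'. if j' = j then 1 else 0)" if "j \<in> sources V E" for j
  proof -
    have "YR V E y k (\<lambda>j'. if j' = j then 1 else 0)
          = (\<Sum>j'\<in>sources V E. if j' = j then YR_column V E y k j' else 0)"
      unfolding YR_eq_sum_columns by (rule sum.cong) auto
    then show ?thesis using that finite_sources by simp
  qed
  then have columns: "YR_column V E y k ` sources V E \<subseteq> kinetic_subspace V E y k"
    by (auto simp: kinetic_subspace_def)
  have "subspace (kinetic_subspace V E y k)"
    unfolding subspace_def kinetic_subspace_def
  proof (intro conjI ballI allI)
    show "0 \<in> range (YR V E y k)"
      by (rule range_eqI[of _ _ "\<lambda>_. 0"]) (simp add: YR_eq_sum_columns)
    show "p + q \<in> range (YR V E y k)" if "p \<in> range (YR V E y k)" "q \<in> range (YR V E y k)" for p q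
      using that by (auto simp: YR_add[symmetric])
    show "c *\<^sub>R p \<in> range (YR V E y k)" if "p \<in> range (YR V E y k)" for c p
      using that by (auto simp: YR_scale[symmetric])
  qed
  with columns show "span (YR_column V E y k ` sources V E) \<subseteq> kinetic_subspace V E y k"
    by (rule span_minimal)
qed

lemma subspace_eq_orthogonal_comp:
  fixes A :: "'a :: euclidean_space set"
  assumes "subspace A" "orthogonal_comp A = B"
  shows "A = orthogonal_comp B"
  using orthogonal_comp_self[OF assms(1)] assms(2) by simp

lemma orthogonal_comp_span: "orthogonal_comp (span G) = {u. \<forall>g\<in>G. orthogonal g u}"
  by (auto simp: orthogonal_comp_def orthogonal_commute intro: span_base orthogonal_to_span)

lemma constant_on_iff_pairwise: "f constant_on A \<longleftrightarrow> (\<forall>i\<in>A. \<forall>j\<in>A. f i = f j)"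
  unfolding constant_on_def by (cases "A = {}") auto

lemma orthogonal_comp_source_subspace:
  "orthogonal_comp (source_subspace V E y) = constant_on_complexes (sources V E) y"
proof -
  have "orthogonal (y i - y i') u \<longleftrightarrow> u \<bullet> y i = u \<bullet> y i'" for i i' u
    by (simp add: orthogonal_def inner_diff_left inner_diff_right inner_commute)
  then show ?thesis
    unfolding source_subspace_def orthogonal_comp_span constant_on_complexes_def
      constant_on_iff_pairwise
    by blast
qed

context unique_terminal_scc
begin

lemma orthogonal_comp_stoich_subspace:
  "orthogonal_comp (stoich_subspace E y) = constant_on_complexes V y"
proof -
  have "(\<lambda>i. u \<bullet> y i) constant_on V \<longleftrightarrow> (\<forall>(i, i')\<in>E. u \<bullet> y i' = u \<bullet> y i)" for u
  proof
    assume edge: "\<forall>(i, i')\<in>E. u \<bullet> y i' = u \<bullet> y i"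
    have "u \<bullet> y b = u \<bullet> y a" if "(a, b) \<in> E\<^sup>*" for a b
      using that edge by (induction rule: rtrancl_induct) auto
    then show "(\<lambda>i. u \<bullet> y i) constant_on V"
      using reaches_root unfolding constant_on_def by metis
  qed (use edges_in_vertices in \<open>auto simp: constant_on_def\<close>)
  moreover have "orthogonal (y i' - y i) u \<longleftrightarrow> u \<bullet> y i' = u \<bullet> y i" for i i' u
    by (simp add: orthogonal_def inner_diff_left inner_diff_right inner_commute)
  ultimately show ?thesis
    unfolding stoich_subspace_def orthogonal_comp_span constant_on_complexes_def
    by blast
qed

lemma orthogonal_comp_kinetic_subspace:
  assumes rc: "rate_constants E k"
  shows "orthogonal_comp (kinetic_subspace V E y k) = constant_on_complexes V y"
proof -
  have "orthogonal (YR_column V E y k j) u \<longleftrightarrow> laplacian E k (\<lambda>i. u \<bullet> y i) j = 0"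
    if "j \<in> sources V E" for j u
    using inner_YR_column[OF simple subsetD[OF sources_subset that], of u y k]
    by (simp add: orthogonal_def inner_commute[of "YR_column V E y k j"])
  then have "orthogonal_comp (kinetic_subspace V E y k)
        = {u. \<forall>j\<in>sources V E. laplacian E k (\<lambda>i. u \<bullet> y i) j = 0}"
    by (auto simp: kinetic_subspace_eq_span[OF finite_vertices] orthogonal_comp_span)
  also have "\<dots> = constant_on_complexes V y"
    using harmonic_constant_on[OF rc] laplacian_constant_on[OF edges_in_vertices] sources_subset
    by (auto simp: constant_on_complexes_def)
  finally show ?thesis .
qed

lemma orthogonal_comp_source_subspace_positive_kernel:
  assumes rc: "rate_constants E k" and pk: "positive_kernel V E y k"
  shows "orthogonal_comp (source_subspace V E y) = constant_on_complexes V y"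
proof -
  obtain x where x_pos: "\<And>j. j \<in> sources V E \<Longrightarrow> 0 < x j" and x_ker: "YR V E y k x = 0"
    using pk by (auto simp: positive_kernel_def)
  have "(\<Sum>j\<in>sources V E. x j * laplacian E k (\<lambda>i. u \<bullet> y i) j) = 0" for u
  proof -
    have "(\<Sum>j\<in>sources V E. x j * laplacian E k (\<lambda>i. u \<bullet> y i) j) = u \<bullet> YR V E y k x"
      unfolding YR_eq_sum_columns inner_sum_right
      by (rule sum.cong) (simp_all add: inner_YR_column[OF simple subsetD[OF sources_subset]])
    then show ?thesis using x_ker by simp
  qed
  then have "constant_on_complexes (sources V E) y = constant_on_complexes V y"
    using constant_on_sources_imp_constant_on[OF rc x_pos] constant_on_subset[OF _ sources_subset]
    by (auto simp: constant_on_complexes_def)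
  then show ?thesis by (simp add: orthogonal_comp_source_subspace)
qed

end

theorem lemma13:
  fixes V :: "'v set" and E :: "('v \<times> 'v) set"
    and y :: "'v \<Rightarrow> real ^ 'n" and k :: "'v \<times> 'v \<Rightarrow> real"
  assumes "simple_digraph V E"
    and "rate_constants E k"
    and "num_terminal V E = 1"
    and "positive_kernel V E y k"
  shows "kinetic_subspace V E y k = source_subspace V E y
         \<and> source_subspace V E y = stoich_subspace E y
         \<and> dependency V E y = deficiency V E y + int (num_terminal_nontrivial V E) - 1"
proof -
  obtain t where "unique_terminal_scc V E t"
    using assms(1,3) by (rule unique_terminal_sccE)
  then interpret unique_terminal_scc V E t .
  have K: "kinetic_subspace V E y k = orthogonal_comp (constant_on_complexes V y)"
    by (rule subspace_eq_orthogonal_comp[OF _ orthogonal_comp_kinetic_subspace[OF assms(2)]])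
       (simp add: kinetic_subspace_eq_span[OF finite_vertices])
  have L: "source_subspace V E y = orthogonal_comp (constant_on_complexes V y)"
    by (rule subspace_eq_orthogonal_comp[OF _ orthogonal_comp_source_subspace_positive_kernel[OF assms(2,4)]])
       (simp add: source_subspace_def)
  have S: "stoich_subspace E y = orthogonal_comp (constant_on_complexes V y)"
    by (rule subspace_eq_orthogonal_comp[OF _ orthogonal_comp_stoich_subspace])
       (simp add: stoich_subspace_def)
  have "dependency V E y = deficiency V E y + int (num_terminal_nontrivial V E) - 1"
    unfolding dependency_def deficiency_def num_linkage_classes_eq_1 card_sources L S by simp
  with K L S show ?thesis by simp
qed

end
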